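(* Let $P(t)$ be an admissible Hilbert polynomial with Macaulay–Hartshorne partition $(e_0,e_1,\dots,e_d)$ and Gotzmann partition $(b_1,\dots,b_r)$. Then: (i) $[\nabla(P)](t)=\sum_{j=1}^r\binom{t+(b_j-1)-(j-1)}{b_j-1}=\sum_{i=0}^{d-1}\binom{t+i}{i+1}-\binom{t+i-e_{i+1}}{i+1}$; (ii) $\nabla\sigma^a\lambda(P)=P$ for all $a\in\mathbb{N}$; (iii) if $\deg P>0$ and $k\in\{1,\dots,r\}$ is the largest index with $b_k\ne0$, then $P-\lambda\nabla(P)=r-k$; if $\deg P=0$ then $\nabla(P)=0$; (iv) $[(\lambda\sigma-\sigma\lambda)(P)](t)=t-r$.
   Context: Binomial coefficients are polynomials: $\binom{t+a}{b}=\frac{(t+a)\cdots(t+a-b+1)}{b!}$ for $b\ge0$ and $0$ for $b<0$. An admissible Hilbert polynomial is the Hilbert polynomial of a nonempty closed subscheme of some projective space over an algebraically closed field; each has a unique Macaulay–Hartshorne expression $P(t)=\sum_{i=0}^d\binom{t+i}{i+1}-\binom{t+i-e_i}{i+1}$ with $e_0\ge\dots\ge e_d>0$ (Macaulay–Hartshorne partition $(e_0,\dots,e_d)$) and a unique Gotzmann expression $P(t)=\sum_{j=1}^r\binom{t+b_j-(j-1)}{b_j}$ with $b_1\ge\dots\ge b_r\ge0$ (Gotzmann partition $(b_1,\dots,b_r)$). Operators: $\nabla\colon\mathbb{Q}[t]\to\mathbb{Q}[t]$, $[\nabla(q)](t):=q(t)-q(t-1)$; $\sigma(q):=1+q$;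 and for admissible $P$, $\lambda(P)$ is the admissible polynomial with Gotzmann partition $(b_1+1,\dots,b_r+1)$, i.e. $\lambda(P)(t)=\sum_{j=1}^r\binom{t+b_j+1-(j-1)}{b_j+1}$ (Macaulay–Hartshorne partition $(e_0,e_0,e_1,\dots,e_d)$). For polynomials of degree $>0$, $\nabla(P)$ is again admissible by (i), so $\lambda\nabla(P)$ makes sense. *)

theory Defs
  imports "HOL-Computational_Algebra.Polynomial"
begin

definition pbinom :: "int \<Rightarrow> int \<Rightarrow> rat poly" where
  "pbinom a b = (if b < 0 then 0
     else smult (1 / fact (nat b)) (\<Prod>i<nat b. [:of_int a - of_nat i, 1:]))"

definition nabla :: "rat poly \<Rightarrow> rat poly" where
  "nabla q = q - pcompose q [:-1, 1:]"

definition sigma :: "rat poly \<Rightarrow> rat poly" where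
  "sigma q = 1 + q"

text \<open>Gotzmann expression for a (0-indexed) list bs = [b_1,...,b_r]:
  sum over j=1..r of binom(t + b_j - (j-1), b_j).\<close>
definition gotzmann_poly :: "nat list \<Rightarrow> rat poly" where
  "gotzmann_poly bs = (\<Sum>j<length bs. pbinom (int (bs ! j) - int j) (int (bs ! j)))"

definition is_gotzmann_partition :: "rat poly \<Rightarrow> nat list \<Rightarrow> bool" where
  "is_gotzmann_partition P bs \<longleftrightarrow> sorted_wrt (\<ge>) bs \<and> P = gotzmann_poly bs"

definition mh_poly :: "nat list \<Rightarrow> rat poly" where
  "mh_poly es = (\<Sum>i<length es. pbinom (int i) (int i + 1) - pbinom (int i - int (es ! i)) (int i + 1))"

definition is_mh_partition :: "rat poly \<Rightarrow> nat list \<Rightarrow> bool" where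
  "is_mh_partition P es \<longleftrightarrow> es \<noteq> [] \<and> sorted_wrt (\<ge>) es \<and> (\<forall>e\<in>set es. e > 0) \<and> P = mh_poly es"

text \<open>Admissible Hilbert polynomial (via Macaulay/Gotzmann: exactly the nonzero polynomials
  admitting a Gotzmann expression).\<close>
definition admissible :: "rat poly \<Rightarrow> bool" where
  "admissible P \<longleftrightarrow> (\<exists>bs. bs \<noteq> [] \<and> is_gotzmann_partition P bs)"

definition gotzmann_partition :: "rat poly \<Rightarrow> nat list" where
  "gotzmann_partition P = (THE bs. is_gotzmann_partition P bs)"

definition lambda_op :: "rat poly \<Rightarrow> rat poly" where
  "lambda_op P = gotzmann_poly (map Suc (gotzmann_partition P))"

end

theory Submission
  imports Defs
begin

text \<open>Pascal's rule makes \<open>\<nabla>\<close> lower both parameters of a binomial polynomial by one.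
  Hence \<open>\<nabla>\<close> acts on a Gotzmann expression by lowering every positive part by one and
  discarding the zero parts, which only contribute constants; this gives (i) and (ii). The same
  observation shows that a Gotzmann expression determines its partition, so \<open>\<lambda>\<close> can be
  evaluated on any Gotzmann expression: in (iii) \<open>\<lambda>\<nabla>\<close> rebuilds exactly the positive
  parts, and in (iv) the zero part appended by \<open>\<sigma>\<close> becomes, after \<open>\<lambda>\<close>, the
  linear term \<open>t + 1 - r\<close>.\<close>

lemma poly_pbinom: "poly (pbinom a b) x = (if b < 0 then 0 else (x + of_int a) gchoose nat b)"
  by (simp add: pbinom_def poly_prod gbinomial_prod_rev atLeast0LessThan divide_inverse
      mult.commute algebra_simps)

lemma pbinom_0 [simp]: "pbinom a 0 = 1"
  by (simp add: pbinom_def)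

lemma pbinom_1: "pbinom a 1 = [:of_int a, 1:]"
  by (simp add: pbinom_def)

lemma nabla_pbinom: "nabla (pbinom a b) = pbinom (a - 1) (b - 1)"
proof -
  have "poly (nabla (pbinom a b)) x = poly (pbinom (a - 1) (b - 1)) x" for x
  proof (cases "b < 1")
    case True
    then show ?thesis
      by (cases "b = 0") (auto simp: nabla_def poly_pcompose poly_pbinom)
  next
    case False
    then have b: "nat b = Suc (nat (b - 1))" by simp
    have "x + of_int a = (x - 1 + of_int a) + 1" by simp
    then have "(x + of_int a) gchoose Suc (nat (b - 1))
        = ((x - 1 + of_int a) gchoose nat (b - 1)) + ((x - 1 + of_int a) gchoose Suc (nat (b - 1)))"
      by (metis gbinomial_Suc_Suc)
    then show ?thesis using False b
      by (simp add: nabla_def poly_pcompose poly_pbinom algebra_simps)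
  qed
  then show ?thesis by (simp add: poly_eq_poly_eq_iff[symmetric] fun_eq_iff)
qed

lemma nabla_add: "nabla (p + q) = nabla p + nabla q"
  by (simp add: nabla_def pcompose_add)

lemma nabla_diff: "nabla (p - q) = nabla p - nabla q"
  by (simp add: nabla_def pcompose_diff)

lemma nabla_sum: "nabla (sum f A) = (\<Sum>i\<in>A. nabla (f i))"
  by (simp add: nabla_def pcompose_sum sum_subtractf)

lemma nabla_const: "degree p = 0 \<Longrightarrow> nabla p = 0"
  by (metis degree_eq_zeroE diff_self nabla_def pcompose_const)

lemma nabla_0 [simp]: "nabla 0 = 0"
  by (simp add: nabla_const)

lemma nabla_of_nat [simp]: "nabla (of_nat n) = 0"
  by (simp add: nabla_const)

lemma sigma_funpow: "(sigma ^^ a) p = of_nat a + p"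
  by (induction a) (simp_all add: sigma_def algebra_simps)

lemma nabla_mh_poly:
  assumes "es \<noteq> []"
  shows "nabla (mh_poly es) = (\<Sum>i<length es - 1.
           pbinom (int i) (int i + 1) - pbinom (int i - int (es ! (i + 1))) (int i + 1))"
proof -
  obtain n where n: "length es = Suc n" using assms by (cases es) auto
  have "nabla (mh_poly es)
      = (\<Sum>i<Suc n. pbinom (int i - 1) (int i) - pbinom (int i - int (es ! i) - 1) (int i))"
    unfolding mh_poly_def nabla_sum nabla_diff nabla_pbinom n by simp
  also have "\<dots> = (\<Sum>i<n. pbinom (int i) (int i + 1) - pbinom (int i - int (es ! (i + 1))) (int i + 1))"
    by (subst sum.lessThan_Suc_shift) (simp add: algebra_simps)
  finally show ?thesis using n by simp
qed

lemma gotzmann_poly_Nil [simp]: "gotzmann_poly [] = 0"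
  by (simp add: gotzmann_poly_def)

lemma gotzmann_poly_snoc:
  "gotzmann_poly (bs @ [b]) = gotzmann_poly bs + pbinom (int b - int (length bs)) (int b)"
  unfolding gotzmann_poly_def by (simp add: nth_append)

lemma gotzmann_poly_append_zeros: "gotzmann_poly (bs @ replicate z 0) = gotzmann_poly bs + of_nat z"
proof (induction z)
  case (Suc z)
  have "bs @ replicate (Suc z) 0 = (bs @ replicate z 0) @ [0]"
    by (simp add: replicate_append_same[symmetric])
  then have "gotzmann_poly (bs @ replicate (Suc z) 0) = gotzmann_poly (bs @ replicate z 0) + 1"
    by (simp only: gotzmann_poly_snoc) simp
  then show ?case using Suc by (simp add: algebra_simps)
qed simp

lemma nabla_gotzmann_poly: "nabla (gotzmann_poly bs)
    = (\<Sum>j<length bs. pbinom (int (bs ! j) - 1 - int j) (int (bs ! j) - 1))"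
  unfolding gotzmann_poly_def nabla_sum nabla_pbinom by (simp add: algebra_simps)

lemma nabla_gotzmann_poly_pos:
  "\<forall>b\<in>set ps. b > 0 \<Longrightarrow> nabla (gotzmann_poly ps) = gotzmann_poly (map (\<lambda>b. b - 1) ps)"
proof (induction ps rule: rev_induct)
  case (snoc b ps)
  then have "int (b - 1) = int b - 1" by auto
  then show ?case using snoc by (simp add: gotzmann_poly_snoc nabla_add nabla_pbinom algebra_simps)
qed simp

lemma nabla_gotzmann_poly_append_zeros:
  "nabla (gotzmann_poly (bs @ replicate z 0)) = nabla (gotzmann_poly bs)"
  by (simp add: gotzmann_poly_append_zeros nabla_add)

lemma map_Suc_map_pred: "\<forall>b\<in>set ps. b > 0 \<Longrightarrow> map Suc (map (\<lambda>b. b - 1) ps) = ps"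
  by (induction ps) auto

lemma sum_list_map_pred_less:
  "\<forall>b\<in>set ps. b > 0 \<Longrightarrow> ps \<noteq> [] \<Longrightarrow> sum_list (map (\<lambda>b. b - 1) ps) < sum_list (ps :: nat list)"
  by (induction ps) (fastforce simp: add_le_less_mono)+

lemma sorted_wrt_ge_map_pred:
  "sorted_wrt (\<ge>) (ps :: nat list) \<Longrightarrow> sorted_wrt (\<ge>) (map (\<lambda>b. b - 1) ps)"
  by (auto simp: sorted_wrt_map intro: sorted_wrt_mono_rel[rotated])

lemma sorted_wrt_ge_append_zeros:
  "sorted_wrt (\<ge>) (bs @ replicate z 0) \<longleftrightarrow> sorted_wrt (\<ge>) (bs :: nat list)"
proof -
  have "sorted_wrt (\<ge>) (replicate z (0 :: nat))" by (induction z) auto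
  then show ?thesis by (auto simp: sorted_wrt_append)
qed

lemma sorted_wrt_ge_split_zeros:
  assumes "sorted_wrt (\<ge>) (bs :: nat list)"
  obtains ps z where "bs = ps @ replicate z 0" "\<forall>b\<in>set ps. b > 0"
proof -
  have "\<exists>ps z. bs = ps @ replicate z 0 \<and> (\<forall>b\<in>set ps. b > 0)"
    using assms
  proof (induction bs)
    case Nil
    show ?case by simp
  next
    case (Cons b bs)
    then obtain ps z where ps: "bs = ps @ replicate z 0" "\<forall>b\<in>set ps. b > 0" by auto
    show ?case
    proof (cases "b > 0")
      case True
      then show ?thesis using ps by (intro exI[of _ "b # ps"] exI[of _ z]) simp
    next
      case False
      then have "bs = replicate (length bs) 0"
        using Cons.prems by (auto simp: replicate_length_same)
      then show ?thesis using False by (intro exI[of _ "[]"] exI[of _ "Suc (length bs)"]) simp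
    qed
  qed
  then show ?thesis using that by blast
qed

text \<open>Induction on the size of both partitions: \<open>\<nabla>\<close> forces the positive parts to agree
  after lowering them by one, and then the numbers of zero parts agree as well.\<close>

lemma gotzmann_poly_inj:
  assumes "sorted_wrt (\<ge>) bs" "sorted_wrt (\<ge>) cs" "gotzmann_poly bs = gotzmann_poly cs"
  shows "bs = cs"
  using assms
proof (induction "sum_list bs + sum_list cs" arbitrary: bs cs rule: less_induct)
  case less
  obtain ps z where ps: "bs = ps @ replicate z 0" "\<forall>b\<in>set ps. b > 0"
    using sorted_wrt_ge_split_zeros[OF less.prems(1)] .
  obtain qs w where qs: "cs = qs @ replicate w 0" "\<forall>b\<in>set qs. b > 0"
    using sorted_wrt_ge_split_zeros[OF less.prems(2)] .
  have "ps = qs"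
  proof (cases "ps = [] \<and> qs = []")
    case False
    let ?ps' = "map (\<lambda>b. b - 1) ps" and ?qs' = "map (\<lambda>b. b - 1) qs"
    have smaller: "sum_list ?ps' + sum_list ?qs' < sum_list bs + sum_list cs"
      using False sum_list_map_pred_less[OF ps(2)] sum_list_map_pred_less[OF qs(2)]
        sum_list_mono[of ps "\<lambda>b. b - 1" id] sum_list_mono[of qs "\<lambda>b. b - 1" id]
        ps(1) qs(1) by fastforce
    have "sorted_wrt (\<ge>) ps" "sorted_wrt (\<ge>) qs"
      using less.prems(1,2) ps(1) qs(1) by (simp_all add: sorted_wrt_ge_append_zeros)
    then have sorted': "sorted_wrt (\<ge>) ?ps'" "sorted_wrt (\<ge>) ?qs'"
      by (blast intro: sorted_wrt_ge_map_pred)+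
    have "gotzmann_poly ?ps' = gotzmann_poly ?qs'"
      using arg_cong[OF less.prems(3), of nabla] ps qs
      by (simp add: nabla_gotzmann_poly_append_zeros nabla_gotzmann_poly_pos)
    then have "?ps' = ?qs'" using less.hyps[OF smaller sorted'] by blast
    then show ?thesis using map_Suc_map_pred[OF ps(2)] map_Suc_map_pred[OF qs(2)] by metis
  qed simp
  moreover have "(of_nat z :: rat poly) = of_nat w"
    using less.prems(3) ps qs \<open>ps = qs\<close> by (simp add: gotzmann_poly_append_zeros)
  then have "z = w" by (metis of_nat_eq_iff)
  ultimately show ?case using ps qs by simp
qed

lemma gotzmann_partition_eq: "is_gotzmann_partition P bs \<Longrightarrow> gotzmann_partition P = bs"
  unfolding gotzmann_partition_def
  by (rule the_equality) (auto simp: is_gotzmann_partition_def intro: gotzmann_poly_inj)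

lemma lambda_op_gotzmann_poly:
  "sorted_wrt (\<ge>) bs \<Longrightarrow> lambda_op (gotzmann_poly bs) = gotzmann_poly (map Suc bs)"
  by (simp add: lambda_op_def gotzmann_partition_eq is_gotzmann_partition_def)

lemma nabla_sigma_funpow_lambda_op:
  "sorted_wrt (\<ge>) bs \<Longrightarrow> nabla ((sigma ^^ a) (lambda_op (gotzmann_poly bs))) = gotzmann_poly bs"
  by (simp add: sigma_funpow nabla_add lambda_op_gotzmann_poly nabla_gotzmann_poly_pos comp_def)

lemma gotzmann_poly_minus_lambda_op_nabla:
  assumes "sorted_wrt (\<ge>) ps" "\<forall>b\<in>set ps. b > 0"
  shows "gotzmann_poly (ps @ replicate z 0) - lambda_op (nabla (gotzmann_poly (ps @ replicate z 0)))
       = of_nat z"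
proof -
  have "nabla (gotzmann_poly (ps @ replicate z 0)) = gotzmann_poly (map (\<lambda>b. b - 1) ps)"
    using assms(2) by (simp only: nabla_gotzmann_poly_append_zeros nabla_gotzmann_poly_pos)
  also have "lambda_op \<dots> = gotzmann_poly ps"
    using lambda_op_gotzmann_poly[OF sorted_wrt_ge_map_pred[OF assms(1)]] map_Suc_map_pred[OF assms(2)]
    by simp
  finally show ?thesis by (simp add: gotzmann_poly_append_zeros)
qed

lemma lambda_op_sigma_commutator:
  assumes "sorted_wrt (\<ge>) bs"
  shows "lambda_op (sigma (gotzmann_poly bs)) - sigma (lambda_op (gotzmann_poly bs))
       = [:- of_nat (length bs), 1:]"
proof -
  have "sigma (gotzmann_poly bs) = gotzmann_poly (bs @ [0])"
    by (simp add: gotzmann_poly_snoc sigma_def)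
  then have "lambda_op (sigma (gotzmann_poly bs)) = gotzmann_poly (map Suc bs @ [1])"
    using assms by (simp add: lambda_op_gotzmann_poly sorted_wrt_append)
  also have "\<dots> = gotzmann_poly (map Suc bs) + [:1 - of_nat (length bs), 1:]"
    by (simp add: gotzmann_poly_snoc pbinom_1)
  finally show ?thesis
    using assms by (simp add: lambda_op_gotzmann_poly sigma_def one_pCons)
qed

lemma length_positive_prefix:
  assumes "bs = ps @ replicate z 0" "\<forall>b\<in>set ps. b > (0 :: nat)"
    and "1 \<le> k" "k \<le> length bs" "bs ! (k - 1) \<noteq> 0"
    and "\<forall>j. k < j \<and> j \<le> length bs \<longrightarrow> bs ! (j - 1) = 0"
  shows "length ps = k"
proof (rule ccontr)
  assume "length ps \<noteq> k"
  then consider "length ps < k" | "length ps > k" by linarith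
  then show False
  proof cases
    case 1
    then have "bs ! (k - 1) = replicate z 0 ! (k - 1 - length ps)"
      using assms(1) by (simp add: nth_append)
    moreover have "k - 1 - length ps < z" using 1 assms(1,4) by simp
    ultimately show False using assms(5) by simp
  next
    case 2
    then have "bs ! k > 0" using assms(1,2) by (auto simp: nth_append)
    moreover have "bs ! k = 0" using assms(1) 2 spec[OF assms(6), of "Suc k"] by simp
    ultimately show False by simp
  qed
qed

theorem lemma2p7:
  fixes P :: "rat poly" and es bs :: "nat list"
  assumes adm: "admissible P"
    and mh: "is_mh_partition P es"
    and gz: "is_gotzmann_partition P bs"
  shows "nabla P = (\<Sum>j<length bs. pbinom (int (bs ! j) - 1 - int j) (int (bs ! j) - 1))
         \<and> nabla P = (\<Sum>i<length es - 1.
              pbinom (int i) (int i + 1) - pbinom (int i - int (es ! (i + 1))) (int i + 1))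
         \<and> (\<forall>a::nat. nabla ((sigma ^^ a) (lambda_op P)) = P)
         \<and> (\<forall>k. degree P > 0 \<longrightarrow> 1 \<le> k \<longrightarrow> k \<le> length bs \<longrightarrow> bs ! (k - 1) \<noteq> 0
            \<longrightarrow> (\<forall>j. k < j \<and> j \<le> length bs \<longrightarrow> bs ! (j - 1) = 0)
            \<longrightarrow> P - lambda_op (nabla P) = of_nat (length bs - k))
         \<and> (degree P = 0 \<longrightarrow> nabla P = 0)
         \<and> lambda_op (sigma P) - sigma (lambda_op P) = [:- of_nat (length bs), 1:]"
proof (intro conjI allI impI)
  have P: "P = gotzmann_poly bs" and sorted: "sorted_wrt (\<ge>) bs"
    using gz by (auto simp: is_gotzmann_partition_def)
  obtain ps z where bs: "bs = ps @ replicate z 0" and pos: "\<forall>b\<in>set ps. b > 0"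
    using sorted_wrt_ge_split_zeros[OF sorted] .
  show "nabla P = (\<Sum>j<length bs. pbinom (int (bs ! j) - 1 - int j) (int (bs ! j) - 1))"
    using P nabla_gotzmann_poly by simp
  show "nabla P = (\<Sum>i<length es - 1.
      pbinom (int i) (int i + 1) - pbinom (int i - int (es ! (i + 1))) (int i + 1))"
    using mh nabla_mh_poly by (simp add: is_mh_partition_def)
  show "nabla ((sigma ^^ a) (lambda_op P)) = P" for a
    unfolding P by (rule nabla_sigma_funpow_lambda_op[OF sorted])
  show "degree P = 0 \<Longrightarrow> nabla P = 0" by (rule nabla_const)
  show "lambda_op (sigma P) - sigma (lambda_op P) = [:- of_nat (length bs), 1:]"
    unfolding P by (rule lambda_op_sigma_commutator[OF sorted])
  fix k
  assume "1 \<le> k" "k \<le> length bs" "bs ! (k - 1) \<noteq> 0"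
    "\<forall>j. k < j \<and> j \<le> length bs \<longrightarrow> bs ! (j - 1) = 0"
  then have "length ps = k" by (rule length_positive_prefix[OF bs pos])
  moreover have "sorted_wrt (\<ge>) ps" using sorted bs by (simp add: sorted_wrt_ge_append_zeros)
  then have "P - lambda_op (nabla P) = of_nat z"
    unfolding P bs by (rule gotzmann_poly_minus_lambda_op_nabla[OF _ pos])
  ultimately show "P - lambda_op (nabla P) = of_nat (length bs - k)" using bs by simp
qed

end
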